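(* Let $P$ be a probability distribution on $\mathbb{R}^p$ with $\mu_4=\int\|\boldsymbol{x}\|_2^4\,P(d\boldsymbol{x})<\infty$, and let $1\le d\le p$. Let $\mathcal{F}_d=\{f_Q : Q\in\mathcal{Q}_d\}$. If $\boldsymbol{Y}_1,\dots,\boldsymbol{Y}_m$ are i.i.d. with law $P$, then \[R_m(\mathcal{F}_d)\le \sqrt{\frac{(p-d)\mu_4}{m}}.\]
   Context: $\mathcal{Q}_d$ denotes the set of all $p\times p$ (orthogonal) projection matrices of rank $d$. For $Q\in\mathcal{Q}_d$, $f_Q:\mathbb{R}^p\to\mathbb{R}$ is $f_Q(\boldsymbol{x})=\boldsymbol{x}^\top(I-Q)\boldsymbol{x}$. For i.i.d. $\boldsymbol{Y}_1,\dots,\boldsymbol{Y}_m\sim P$ and a function class $\mathcal{F}$, with $\sigma_1,\dots,\sigma_m$ i.i.d. Rademacher variables (uniform on $\{+1,-1\}$) independent of the $\boldsymbol{Y}_i$, the population Rademacher complexity is $R_m(\mathcal{F})=\frac1m\mathbb{E}\sup_{f\in\mathcal{F}}\sum_{i=1}^m\sigma_i f(\boldsymbol{Y}_i)$. $\mu_k=\int\|\boldsymbol{x}\|_2^k\,dP$. *)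

theory Defs
  imports "HOL-Analysis.Analysis" "HOL-Probability.Probability"
begin

definition proj_mats :: "nat \<Rightarrow> (real^'p^'p) set" where
  "proj_mats d = {Q. transpose Q = Q \<and> Q ** Q = Q \<and> rank Q = d}"

definition fQ :: "real^'p^'p \<Rightarrow> real^'p \<Rightarrow> real" where
  "fQ Q x = x \<bullet> ((mat 1 - Q) *v x)"

definition F_class :: "nat \<Rightarrow> (real^'p \<Rightarrow> real) set" where
  "F_class d = fQ ` proj_mats d"

text \<open>Population Rademacher complexity: Y_1..Y_m i.i.d. P (product measure), sigma_i
  i.i.d. uniform on {-1,1} independent of Y (expectation over sigma written as a finite average).\<close>
definition rademacher_complexity :: "nat \<Rightarrow> 'a measure \<Rightarrow> ('a \<Rightarrow> real) set \<Rightarrow> real" where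
  "rademacher_complexity m P F =
     (1 / real m) * (\<integral>Y. ((\<Sum>\<sigma>\<in>({..<m} \<rightarrow>\<^sub>E {-1, 1::real}).
          (SUP f\<in>F. \<Sum>i<m. \<sigma> i * f (Y i))) / 2 ^ m) \<partial>(PiM {..<m} (\<lambda>_. P)))"

end

(*
  For a sign vector sigma put A = sum_i sigma_i Y_i Y_i^T; then sum_i sigma_i f_Q(Y_i) is the
  Frobenius product of I - Q with A. As I - Q is again an orthogonal projection, its squared
  Frobenius norm is its trace p - d, so for every alpha > 0 Young's inequality bounds the supremum
  over Q by (alpha (p - d) + |A|_F^2 / alpha) / 2. Averaging over the signs kills the cross terms,
  giving sum_i |Y_i|^4 in place of |A|_F^2; integrating and optimising over alpha yields
  m R_m <= sqrt ((p - d) m mu_4). The bound being linear in |A|_F^2 replaces the usual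
  Cauchy-Schwarz and Jensen steps.
*)
theory Submission
  imports Defs
begin

lemma proj_mats_nonempty:
  assumes "d \<le> CARD('n)"
  shows "proj_mats d \<noteq> ({} :: (real^'n^'n) set)"
proof -
  obtain S :: "'n set" where S: "card S = d"
    using obtain_subset_with_card_n[of d "UNIV::'n set"] assms by auto
  define Q :: "real^'n^'n" where "Q = (\<chi> i j. if i = j \<and> i \<in> S then 1 else 0)"
  have "transpose Q = Q"
    by (auto simp: Q_def transpose_def vec_eq_iff)
  moreover have "Q ** Q = Q"
  proof -
    have "(if i = k \<and> i \<in> S then 1 else 0) * (if k = j \<and> k \<in> S then 1 else 0)
        = (if k = i then (if i = j \<and> i \<in> S then 1 else 0) else (0::real))" for i j k :: 'n
      by auto
    then show ?thesis
      by (simp add: Q_def matrix_matrix_mult_def vec_eq_iff)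
  qed
  moreover have "range ((*v) Q) = {x. \<forall>i. i \<notin> S \<longrightarrow> x$i = 0}"
  proof -
    have Qx: "Q *v x = (\<chi> i. if i \<in> S then x$i else 0)" for x
      by (auto simp: Q_def matrix_vector_mult_def vec_eq_iff if_distrib[of "\<lambda>x. x * _"] cong: if_cong)
    have "x \<in> range ((*v) Q)" if "\<forall>i. i \<notin> S \<longrightarrow> x$i = 0" for x
    proof (rule range_eqI)
      show "x = Q *v x"
        using that by (auto simp: Qx vec_eq_iff)
    qed
    then have "{x. \<forall>i. i \<notin> S \<longrightarrow> x$i = 0} \<subseteq> range ((*v) Q)"
      by blast
    then show ?thesis
      by (auto simp: Qx)
  qed
  then have "rank Q = d"
    using dim_substandard_cart[where 'a=real, of S] S by (simp add: rank_dim_range dim_vec_eq)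
  ultimately show ?thesis
    unfolding proj_mats_def by blast
qed

lemma inner_self_eq_sum_orthonormal:
  fixes B :: "'a::real_inner set"
  assumes fin: "finite B" and orth: "pairwise orthogonal B"
    and unit: "\<And>b. b \<in> B \<Longrightarrow> norm b = 1" and v: "v \<in> span B"
  shows "v \<bullet> v = (\<Sum>b\<in>B. (b \<bullet> v)^2)"
proof -
  obtain u where u: "v = (\<Sum>c\<in>B. u c *\<^sub>R c)"
    using v span_finite[OF fin] by auto
  have coeff: "b \<bullet> v = u b" if "b \<in> B" for b
  proof -
    have "b \<bullet> c = (if c = b then 1 else 0)" if "c \<in> B" for c
      using orth unit[OF \<open>b \<in> B\<close>] \<open>b \<in> B\<close> that
      by (auto simp: pairwise_def orthogonal_def norm_eq_1)
    then have "b \<bullet> v = (\<Sum>c\<in>B. if c = b then u b else 0)"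
      by (auto simp: u inner_sum_right intro: sum.cong)
    then show ?thesis
      using fin \<open>b \<in> B\<close> by simp
  qed
  have "v \<bullet> v = (\<Sum>c\<in>B. u c * (c \<bullet> v))"
    by (simp add: u inner_sum_left)
  also have "\<dots> = (\<Sum>c\<in>B. (c \<bullet> v)^2)"
    by (rule sum.cong) (auto simp: coeff power2_eq_square)
  finally show ?thesis .
qed

lemma diag_eq_sum_sq_row:
  fixes A :: "'a::comm_semiring_1^'n^'n"
  assumes "transpose A = A" and "A ** A = A"
  shows "A$j$j = (\<Sum>l\<in>UNIV. (A$j$l)^2)"
proof -
  have "A$l$j = A$j$l" for l
    using arg_cong[OF assms(1), of "\<lambda>M. M$l$j"] by (simp add: transpose_def)
  then have "(A ** A)$j$j = (\<Sum>l\<in>UNIV. (A$j$l)^2)"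
    by (simp add: matrix_matrix_mult_def power2_eq_square)
  then show ?thesis
    by (simp add: assms(2))
qed

lemma trace_symmetric_idempotent:
  fixes Q :: "real^'n^'n"
  assumes sym: "transpose Q = Q" and idem: "Q ** Q = Q"
  shows "trace Q = real (rank Q)"
proof -
  define V where "V = range ((*v) Q)"
  have "subspace V"
    unfolding V_def by (rule linear_subspace_image[OF matrix_vector_mul_linear subspace_UNIV])
  then obtain B where B: "B \<subseteq> V" "pairwise orthogonal B" "\<And>b. b \<in> B \<Longrightarrow> norm b = 1"
      "independent B" "card B = dim V" "span B = V"
    using orthonormal_basis_subspace by metis
  have fin: "finite B"
    using B(4) independent_imp_finite by blast
  txt \<open>Row j of Q is its j-th column, hence lies in V; expanding its squared norm in the
    orthonormal basis B of V turns the trace into \<open>\<Sum>b\<in>B. b \<bullet> b = card B\<close>.\<close>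
  have row_in_V: "Q$j \<in> V" for j
    using matrix_vector_mult_basis[of Q j] column_transpose[of j Q] sym
    by (metis V_def rangeI row_def vec_lambda_eta)
  have "b \<bullet> Q$j = b$j" if "b \<in> B" for b j
  proof -
    from that B(1) obtain x where "b = Q *v x"
      unfolding V_def by blast
    then have "Q *v b = b"
      by (simp add: matrix_vector_mul_assoc idem)
    then show ?thesis
      by (metis inner_commute matrix_vector_mul_component)
  qed
  then have "trace Q = (\<Sum>j\<in>UNIV. \<Sum>b\<in>B. (b$j)^2)"
    using inner_self_eq_sum_orthonormal[OF fin B(2,3)] B(6) row_in_V
    by (simp add: trace_def diag_eq_sum_sq_row[OF sym idem] inner_vec_def power2_eq_square)
  also have "\<dots> = (\<Sum>b\<in>B. b \<bullet> b)"
    by (subst sum.swap) (simp add: inner_vec_def power2_eq_square)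
  also have "\<dots> = real (rank Q)"
    using B(3,5) by (simp add: norm_eq_1 rank_dim_range V_def)
  finally show ?thesis .
qed

lemma sum_sq_entries_complement_proj_mats:
  fixes Q :: "real^'n^'n"
  assumes "Q \<in> proj_mats d"
  shows "(\<Sum>j\<in>UNIV. \<Sum>l\<in>UNIV. ((mat 1 - Q)$j$l)^2) = real CARD('n) - real d"
proof -
  have sym: "transpose Q = Q" and idem: "Q ** Q = Q" and rank: "rank Q = d"
    using assms by (auto simp: proj_mats_def)
  have "transpose (mat 1 - Q) = mat 1 - Q"
    using sym by (simp add: transpose_def vec_eq_iff mat_def)
  moreover have "(mat 1 - Q) ** (mat 1 - Q) = mat 1 - Q"
  proof -
    have "Q *v (Q *v x) = Q *v x" for x
      by (simp add: matrix_vector_mul_assoc idem)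
    then show ?thesis
      by (simp add: matrix_eq matrix_vector_mul_assoc[symmetric] matrix_vector_mult_diff_rdistrib
          matrix_vector_mult_diff_distrib)
  qed
  ultimately have "(\<Sum>j\<in>UNIV. \<Sum>l\<in>UNIV. ((mat 1 - Q)$j$l)^2) = trace (mat 1 - Q)"
    unfolding trace_def by (intro sum.cong refl diag_eq_sum_sq_row[symmetric])
  also have "\<dots> = real CARD('n) - real d"
    using trace_symmetric_idempotent[OF sym idem] rank by (simp add: trace_sub trace_I)
  finally show ?thesis .
qed

lemma sum_mult_fQ_eq:
  fixes Q :: "real^'n^'n" and Y :: "'a \<Rightarrow> real^'n"
  shows "(\<Sum>i\<in>I. \<sigma> i * fQ Q (Y i)) =
    (\<Sum>j\<in>UNIV. \<Sum>l\<in>UNIV. (mat 1 - Q)$j$l * (\<Sum>i\<in>I. \<sigma> i * Y i$j * Y i$l))"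
proof -
  have "(\<Sum>i\<in>I. \<sigma> i * fQ Q (Y i)) =
      (\<Sum>i\<in>I. \<Sum>j\<in>UNIV. \<Sum>l\<in>UNIV. (mat 1 - Q)$j$l * (\<sigma> i * Y i$j * Y i$l))"
    by (simp add: fQ_def inner_vec_def matrix_vector_mult_def sum_distrib_left sum_distrib_right mult_ac)
  also have "\<dots> = (\<Sum>j\<in>UNIV. \<Sum>l\<in>UNIV. \<Sum>i\<in>I. (mat 1 - Q)$j$l * (\<sigma> i * Y i$j * Y i$l))"
    by (simp add: sum.swap[of _ I])
  finally show ?thesis
    by (simp add: sum_distrib_left)
qed

lemma mult_le_scaled_squares:
  fixes x y \<alpha> :: real
  assumes "\<alpha> > 0"
  shows "x * y \<le> (\<alpha> * x^2 + y^2 / \<alpha>) / 2"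
proof -
  have "(\<alpha> * x^2 + y^2 / \<alpha>) / 2 - x * y = (\<alpha> * x - y)^2 / (2 * \<alpha>)"
    using assms by (simp add: field_simps power2_eq_square)
  then show ?thesis
    using assms by (smt (verit) divide_nonneg_pos zero_le_power2)
qed

lemma sum_mult_fQ_le:
  fixes Q :: "real^'n^'n" and Y :: "'a \<Rightarrow> real^'n"
  assumes "Q \<in> proj_mats d" and "\<alpha> > 0"
  shows "(\<Sum>i\<in>I. \<sigma> i * fQ Q (Y i)) \<le>
    (\<alpha> * (real CARD('n) - real d) +
      (\<Sum>j\<in>UNIV. \<Sum>l\<in>UNIV. (\<Sum>i\<in>I. \<sigma> i * Y i$j * Y i$l)^2) / \<alpha>) / 2"
proof -
  let ?M = "\<lambda>j l. (mat 1 - Q)$j$l" and ?A = "\<lambda>j l. \<Sum>i\<in>I. \<sigma> i * Y i$j * Y i$l"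
  have "(\<Sum>i\<in>I. \<sigma> i * fQ Q (Y i)) = (\<Sum>j\<in>UNIV. \<Sum>l\<in>UNIV. ?M j l * ?A j l)"
    by (rule sum_mult_fQ_eq)
  also have "\<dots> \<le> (\<Sum>j\<in>UNIV. \<Sum>l\<in>UNIV. (\<alpha> * (?M j l)^2 + (?A j l)^2 / \<alpha>) / 2)"
    by (intro sum_mono mult_le_scaled_squares assms(2))
  also have "\<dots> = (\<alpha> * (\<Sum>j\<in>UNIV. \<Sum>l\<in>UNIV. (?M j l)^2) +
      (\<Sum>j\<in>UNIV. \<Sum>l\<in>UNIV. (?A j l)^2) / \<alpha>) / 2"
    by (simp add: sum_divide_distrib sum.distrib sum_distrib_left add_divide_distrib)
  finally show ?thesis
    by (simp only: sum_sq_entries_complement_proj_mats[OF assms(1)])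
qed

lemma sum_signs_mult:
  assumes "finite I" and "i \<in> I" and "i' \<in> I"
  shows "(\<Sum>\<sigma>\<in>I \<rightarrow>\<^sub>E {-1, 1::real}. \<sigma> i * \<sigma> i') = (if i = i' then 2 ^ card I else 0)"
proof -
  txt \<open>Writing \<open>\<sigma> i * \<sigma> i'\<close> as a product over all coordinates makes the sum factorise.\<close>
  define f where "f l x = (if l = i then x else 1) * (if l = i' then x else 1)" for l and x :: real
  have "(\<Sum>\<sigma>\<in>I \<rightarrow>\<^sub>E {-1, 1::real}. \<sigma> i * \<sigma> i') = (\<Sum>\<sigma>\<in>I \<rightarrow>\<^sub>E {-1, 1}. \<Prod>l\<in>I. f l (\<sigma> l))"
    using assms by (simp add: f_def prod.distrib)
  also have "\<dots> = (\<Prod>l\<in>I. \<Sum>x\<in>{-1, 1}. f l x)"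
    using assms(1) by (rule prod_sum_PiE[symmetric]) auto
  also have "\<dots> = (if i = i' then 2 ^ card I else 0)"
  proof (cases "i = i'")
    case True
    then have "(\<Sum>x\<in>{-1, 1}. f l x) = 2" for l
      by (simp add: f_def)
    with True show ?thesis
      by simp
  next
    case False
    then have "(\<Sum>x\<in>{-1, 1}. f i x) = 0"
      by (simp add: f_def)
    with False show ?thesis
      using assms by (force simp: prod_zero_iff)
  qed
  finally show ?thesis .
qed

lemma sum_signs_square:
  fixes c :: "'a \<Rightarrow> real"
  assumes "finite I"
  shows "(\<Sum>\<sigma>\<in>I \<rightarrow>\<^sub>E {-1, 1::real}. (\<Sum>i\<in>I. \<sigma> i * c i)^2) = 2 ^ card I * (\<Sum>i\<in>I. (c i)^2)"
proof -
  have "(\<Sum>\<sigma>\<in>I \<rightarrow>\<^sub>E {-1, 1::real}. (\<Sum>i\<in>I. \<sigma> i * c i)^2)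
      = (\<Sum>i\<in>I. \<Sum>i'\<in>I. c i * c i' * (\<Sum>\<sigma>\<in>I \<rightarrow>\<^sub>E {-1, 1::real}. \<sigma> i * \<sigma> i'))"
    by (simp add: power2_eq_square sum_product sum_distrib_left mult_ac sum.swap[of _ "I \<rightarrow>\<^sub>E _"])
  also have "\<dots> = (\<Sum>i\<in>I. \<Sum>i'\<in>I. if i' = i then 2 ^ card I * (c i)^2 else 0)"
    using assms by (intro sum.cong refl) (auto simp: sum_signs_mult power2_eq_square)
  also have "\<dots> = 2 ^ card I * (\<Sum>i\<in>I. (c i)^2)"
    using assms by (simp add: sum_distrib_left)
  finally show ?thesis .
qed

lemma sum_sq_entry_products:
  fixes x :: "real^'n"
  shows "(\<Sum>j\<in>UNIV. \<Sum>l\<in>UNIV. (x$j * x$l)^2) = norm x ^ 4"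
proof -
  have "norm x ^ 2 = (\<Sum>j\<in>UNIV. (x$j)^2)"
    by (simp only: power2_norm_eq_inner) (simp add: inner_vec_def power2_eq_square)
  moreover have "norm x ^ 4 = norm x ^ 2 * norm x ^ 2"
    by (simp add: power_mult[symmetric])
  ultimately have "norm x ^ 4 = (\<Sum>j\<in>UNIV. (x$j)^2) * (\<Sum>l\<in>UNIV. (x$l)^2)"
    by simp
  then show ?thesis
    by (simp add: sum_product power_mult_distrib)
qed

lemma average_signs_SUP_F_class_le:
  fixes Y :: "nat \<Rightarrow> real^'n"
  assumes "d \<le> CARD('n)" and "\<alpha> > 0"
  shows "(\<Sum>\<sigma>\<in>{..<m} \<rightarrow>\<^sub>E {-1, 1::real}. (SUP f\<in>F_class d. \<Sum>i<m. \<sigma> i * f (Y i))) / 2 ^ m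
     \<le> (\<alpha> * (real CARD('n) - real d) + (\<Sum>i<m. norm (Y i) ^ 4) / \<alpha>) / 2"
proof -
  let ?S = "{..<m} \<rightarrow>\<^sub>E {-1, 1::real}" and ?k = "real CARD('n) - real d"
  let ?A = "\<lambda>\<sigma>. \<Sum>j\<in>UNIV. \<Sum>l\<in>UNIV. (\<Sum>i<m. \<sigma> i * Y i$j * Y i$l)^2"
  have SUP_le: "(SUP f\<in>F_class d. \<Sum>i<m. \<sigma> i * f (Y i)) \<le> (\<alpha> * ?k + ?A \<sigma> / \<alpha>) / 2" for \<sigma>
  proof (rule cSUP_least)
    show "F_class d \<noteq> ({} :: (real^'n \<Rightarrow> real) set)"
      using proj_mats_nonempty[OF assms(1)] by (simp add: F_class_def)
    show "(\<Sum>i<m. \<sigma> i * f (Y i)) \<le> (\<alpha> * ?k + ?A \<sigma> / \<alpha>) / 2" if "f \<in> F_class d" for f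
      using that sum_mult_fQ_le[OF _ assms(2)] by (auto simp: F_class_def)
  qed
  have "(\<Sum>\<sigma>\<in>?S. ?A \<sigma>) = (\<Sum>j\<in>UNIV. \<Sum>l\<in>UNIV. \<Sum>\<sigma>\<in>?S. (\<Sum>i<m. \<sigma> i * (Y i$j * Y i$l))^2)"
    by (simp add: sum.swap[of _ ?S] mult.assoc)
  also have "\<dots> = (\<Sum>j\<in>UNIV. \<Sum>l\<in>UNIV. 2 ^ m * (\<Sum>i<m. (Y i$j * Y i$l)^2))"
    by (simp add: sum_signs_square)
  also have "\<dots> = 2 ^ m * (\<Sum>i<m. \<Sum>j\<in>UNIV. \<Sum>l\<in>UNIV. (Y i$j * Y i$l)^2)"
    by (simp add: sum_distrib_left sum.swap[of _ "{..<m}"])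
  finally have sum_A: "(\<Sum>\<sigma>\<in>?S. ?A \<sigma>) = 2 ^ m * (\<Sum>i<m. norm (Y i) ^ 4)"
    by (simp only: sum_sq_entry_products)
  have "(\<Sum>\<sigma>\<in>?S. (SUP f\<in>F_class d. \<Sum>i<m. \<sigma> i * f (Y i))) \<le> (\<Sum>\<sigma>\<in>?S. (\<alpha> * ?k + ?A \<sigma> / \<alpha>) / 2)"
    by (intro sum_mono SUP_le)
  also have "\<dots> = (2 ^ m * (\<alpha> * ?k) + (\<Sum>\<sigma>\<in>?S. ?A \<sigma>) / \<alpha>) / 2"
    by (simp add: sum_divide_distrib[symmetric] sum.distrib card_PiE add_divide_distrib)
  also have "\<dots> = 2 ^ m * ((\<alpha> * ?k + (\<Sum>i<m. norm (Y i) ^ 4) / \<alpha>) / 2)"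
    by (subst sum_A) (simp add: field_simps)
  finally show ?thesis
    by (simp add: field_simps)
qed

lemma le_sqrt_mult_if_le_scaled_mean:
  fixes X a b :: real
  assumes a: "a \<ge> 0" and b: "b \<ge> 0" and le: "\<And>\<alpha>. \<alpha> > 0 \<Longrightarrow> X \<le> (\<alpha> * a + b / \<alpha>) / 2"
  shows "X \<le> sqrt (a * b)"
proof (cases "a > 0 \<and> b > 0")
  case True
  define \<alpha> where "\<alpha> = sqrt (b / a)"
  have "\<alpha> > 0" and "\<alpha> * a = sqrt (a * b)" and "b / \<alpha> = sqrt (a * b)"
    using True by (simp_all add: \<alpha>_def real_sqrt_divide real_sqrt_mult field_simps)
  then show ?thesis
    using le[of \<alpha>] by simp
next
  case False
  txt \<open>Then a or b vanishes, and letting \<open>\<alpha>\<close> tend to \<open>\<infinity>\<close> or to 0 gives \<open>X \<le> 0\<close>.\<close>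
  have "X \<le> 0 + \<epsilon>" if "\<epsilon> > 0" for \<epsilon>
  proof (cases "a = 0")
    case True
    have "X \<le> b / ((b + 1) / \<epsilon>) / 2"
      using le[of "(b + 1) / \<epsilon>"] True b that by simp
    also have "\<dots> \<le> \<epsilon>"
      using b that by (simp add: field_simps)
    finally show ?thesis by simp
  next
    case False
    then have "b = 0"
      using \<open>\<not> (a > 0 \<and> b > 0)\<close> a b by simp
    have "X \<le> \<epsilon> / (a + 1) * a / 2"
      using le[of "\<epsilon> / (a + 1)"] \<open>b = 0\<close> a that by simp
    also have "\<dots> \<le> \<epsilon>"
      using a that by (simp add: field_simps)
    finally show ?thesis by simp
  qed
  then have "X \<le> 0"
    by (rule field_le_epsilon)
  moreover have "a * b = 0"
    using False a b by auto
  ultimately show ?thesis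
    by (metis real_sqrt_zero)
qed

lemma
  fixes g :: "'a \<Rightarrow> real"
  assumes P: "prob_space P" and g: "integrable P g"
  shows integrable_PiM_sum_component: "integrable (PiM I (\<lambda>_. P)) (\<lambda>Y. \<Sum>i\<in>I. g (Y i))"
    and integral_PiM_sum_component:
      "(\<integral>Y. (\<Sum>i\<in>I. g (Y i)) \<partial>PiM I (\<lambda>_. P)) = real (card I) * integral\<^sup>L P g"
proof -
  have g_meas: "g \<in> borel_measurable P"
    using g by (rule borel_measurable_integrable)
  have comp: "(\<lambda>Y. Y i) \<in> measurable (PiM I (\<lambda>_. P)) P"
    and distr: "distr (PiM I (\<lambda>_. P)) P (\<lambda>Y. Y i) = P" if "i \<in> I" for i
    using that P by (auto intro: measurable_component_singleton distr_PiM_component)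
  have integrable_comp: "integrable (PiM I (\<lambda>_. P)) (\<lambda>Y. g (Y i))" if "i \<in> I" for i
    using integrable_distr_eq[OF comp[OF that] g_meas] distr[OF that] g by simp
  then show "integrable (PiM I (\<lambda>_. P)) (\<lambda>Y. \<Sum>i\<in>I. g (Y i))"
    by (rule Bochner_Integration.integrable_sum)
  have "(\<integral>Y. g (Y i) \<partial>PiM I (\<lambda>_. P)) = integral\<^sup>L P g" if "i \<in> I" for i
    using integral_distr[OF comp[OF that] g_meas] distr[OF that] by simp
  with integrable_comp show
    "(\<integral>Y. (\<Sum>i\<in>I. g (Y i)) \<partial>PiM I (\<lambda>_. P)) = real (card I) * integral\<^sup>L P g"
    by (simp add: integral_sum)
qed

lemma integral_average_signs_SUP_F_class_le:
  fixes P :: "(real^'n) measure"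
  assumes P: "prob_space P" and int4: "integrable P (\<lambda>x. norm x ^ 4)"
    and "d \<le> CARD('n)" and "\<alpha> > 0"
  shows "(\<integral>Y. (\<Sum>\<sigma>\<in>{..<m} \<rightarrow>\<^sub>E {-1, 1::real}. (SUP f\<in>F_class d. \<Sum>i<m. \<sigma> i * f (Y i))) / 2 ^ m
      \<partial>PiM {..<m} (\<lambda>_. P))
    \<le> (\<alpha> * (real CARD('n) - real d) + real m * (\<integral>x. norm x ^ 4 \<partial>P) / \<alpha>) / 2"
    (is "integral\<^sup>L ?Pm ?G \<le> _")
proof -
  let ?H = "\<lambda>Y. (\<alpha> * (real CARD('n) - real d) + (\<Sum>i<m. norm (Y i) ^ 4) / \<alpha>) / 2"
  interpret prob_space ?Pm
    by (intro prob_space_PiM P)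
  have int_sum: "integrable ?Pm (\<lambda>Y. \<Sum>i<m. norm (Y i) ^ 4)"
    using integrable_PiM_sum_component[OF P int4] .
  have "integral\<^sup>L ?Pm ?G \<le> integral\<^sup>L ?Pm ?H"
    \<comment> \<open>\<open>integral_mono'\<close> does not require the supremum to be integrable\<close>
  proof (rule integral_mono')
    show "integrable ?Pm ?H"
      using int_sum by simp
    show "?G Y \<le> ?H Y" for Y
      using average_signs_SUP_F_class_le[OF assms(3,4)] .
    show "0 \<le> ?H Y" for Y
      using assms(3,4) by (simp add: sum_nonneg)
  qed
  also have "\<dots> = (\<alpha> * (real CARD('n) - real d) + real m * (\<integral>x. norm x ^ 4 \<partial>P) / \<alpha>) / 2"
    using int_sum integral_PiM_sum_component[OF P int4, of "{..<m}"] by (simp add: prob_space)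
  finally show ?thesis .
qed

theorem theorem1:
  fixes P :: "(real^'p) measure" and d m :: nat
  assumes "prob_space P"
    and "sets P = sets borel"
    and "integrable P (\<lambda>x. norm x ^ 4)"
    and "1 \<le> d" and "d \<le> CARD('p)"
    and "m \<ge> 1"
  shows "rademacher_complexity m P (F_class d)
           \<le> sqrt (real (CARD('p) - d) * (\<integral>x. norm x ^ 4 \<partial>P) / real m)"
proof -
  let ?k = "real CARD('p) - real d" and ?\<mu> = "\<integral>x. norm x ^ 4 \<partial>P"
  have "?k \<ge> 0" and "real m * ?\<mu> \<ge> 0"
    using assms(5) by (simp_all add: integral_nonneg_AE)
  note integral_le = le_sqrt_mult_if_le_scaled_mean[OF this
      integral_average_signs_SUP_F_class_le[OF assms(1,3,5)]]
  have "rademacher_complexity m P (F_class d) \<le> 1 / real m * sqrt (?k * (real m * ?\<mu>))"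
    using mult_left_mono[OF integral_le, of "1 / real m"] unfolding rademacher_complexity_def by simp
  also have "\<dots> = sqrt (?k * ?\<mu> / real m)"
  proof -
    have "?k * ?\<mu> / real m = ?k * (real m * ?\<mu>) / (real m)^2"
      using assms(6) by (simp add: power2_eq_square)
    then show ?thesis
      by (simp add: real_sqrt_divide)
  qed
  finally show ?thesis
    using assms(5) by (simp add: of_nat_diff)
qed

end
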